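(* For $k \in \mathbb{N}$ let $o(k) \in \mathbb{N}_0$ be the smallest $n \in \mathbb{N}_0$ with $2^n - n \ge k$. Then (1) $\{n(F) : F \in \mathcal{UHIT}_{\delta=k}\} = \{n(F) : F \in \mathcal{MU}_{\delta=k}\} = \{n \in \mathbb{N}_0 : n \ge o(k)\}$; (2) $\{c(F) : F \in \mathcal{UHIT}_{\delta=k}\} = \{c(F) : F \in \mathcal{MU}_{\delta=k}\} = \{n \in \mathbb{N} : n \ge o(k) + k\}$.
   Context: Literals come with a fixed-point-free involution $x \mapsto \overline{x}$; variables are positive literals. A clause is a finite set $C$ of literals with $C \cap \overline{C} = \emptyset$; a clause-set is a finite set of clauses. $\mathrm{var}(F)$, $n(F) = |\mathrm{var}(F)|$, $c(F) = |F|$, $\delta(F) = c(F) - n(F)$. $\mathcal{MU}$ is the class of minimally unsatisfiable clause-sets (unsatisfiable, but removing any clause gives a satisfiable clause-set). $F$ is hitting if for all distinct $C, D \in F$, $C \cap \overline{D} \ne \emptyset$; $\mathcal{UHIT}$ is the class of unsatisfiable hitting clause-sets. $\mathcal{C}_{\delta=k} = \{F \in \mathcal{C} : \delta(F) = k\}$. *)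

theory Defs
  imports Main
begin

datatype lit = Pos nat | Neg nat

fun comp_lit :: "lit \<Rightarrow> lit" where
  "comp_lit (Pos v) = Neg v"
| "comp_lit (Neg v) = Pos v"

definition comp_set :: "lit set \<Rightarrow> lit set" where
  "comp_set C = comp_lit ` C"

fun lit_var :: "lit \<Rightarrow> nat" where
  "lit_var (Pos v) = v"
| "lit_var (Neg v) = v"

definition is_clause :: "lit set \<Rightarrow> bool" where
  "is_clause C \<longleftrightarrow> finite C \<and> C \<inter> comp_set C = {}"

definition is_clause_set :: "lit set set \<Rightarrow> bool" where
  "is_clause_set F \<longleftrightarrow> finite F \<and> (\<forall>C\<in>F. is_clause C)"

definition vars :: "lit set set \<Rightarrow> nat set" where
  "vars F = (\<Union>C\<in>F. lit_var ` C)"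

definition nvars :: "lit set set \<Rightarrow> nat" where
  "nvars F = card (vars F)"

definition ncls :: "lit set set \<Rightarrow> nat" where
  "ncls F = card F"

definition deficiency :: "lit set set \<Rightarrow> int" where
  "deficiency F = int (ncls F) - int (nvars F)"

fun lit_true :: "(nat \<Rightarrow> bool) \<Rightarrow> lit \<Rightarrow> bool" where
  "lit_true a (Pos v) = a v"
| "lit_true a (Neg v) = (\<not> a v)"

definition satisfiable :: "lit set set \<Rightarrow> bool" where
  "satisfiable F \<longleftrightarrow> (\<exists>a. \<forall>C\<in>F. \<exists>x\<in>C. lit_true a x)"

definition MU :: "lit set set set" where
  "MU = {F. is_clause_set F \<and> \<not> satisfiable F \<and> (\<forall>C\<in>F. satisfiable (F - {C}))}"

definition hitting :: "lit set set \<Rightarrow> bool" where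
  "hitting F \<longleftrightarrow> (\<forall>C\<in>F. \<forall>D\<in>F. C \<noteq> D \<longrightarrow> C \<inter> comp_set D \<noteq> {})"

definition UHIT :: "lit set set set" where
  "UHIT = {F. is_clause_set F \<and> \<not> satisfiable F \<and> hitting F}"

definition with_deficiency :: "lit set set set \<Rightarrow> int \<Rightarrow> lit set set set" where
  "with_deficiency \<C> k = {F \<in> \<C>. deficiency F = k}"

definition ofun :: "nat \<Rightarrow> nat" where
  "ofun k = (LEAST n. (2::int) ^ n - int n \<ge> int k)"

end

theory Submission
  imports Defs
begin

text \<open>
  In a minimally unsatisfiable clause-set every clause has an assignment falsifying it and
  satisfying all other clauses; restricted to the variables of the clause-set these assignments
  are pairwise distinct, so \<open>c(F) \<le> 2^n(F)\<close>, i.e. \<open>\<delta>(F) = k\<close> forces \<open>2^n(F) - n(F) \<ge> k\<close>.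
  Conversely, every unsatisfiable hitting clause-set is minimally unsatisfiable, and for
  \<open>n < c \<le> 2^n\<close> a splitting tree on \<open>n\<close> variables with \<open>c\<close> leaves, read as the clause-set
  of its branches, is an unsatisfiable hitting clause-set with exactly \<open>n\<close> variables and
  \<open>c\<close> clauses.
\<close>

lemma comp_lit_comp_lit [simp]: "comp_lit (comp_lit x) = x"
  by (cases x) auto

lemma lit_true_comp_lit [simp]: "lit_true a (comp_lit x) \<longleftrightarrow> \<not> lit_true a x"
  by (cases x) auto

lemma lit_true_cong: "a (lit_var x) = b (lit_var x) \<Longrightarrow> lit_true a x = lit_true b x"
  by (cases x) auto

lemma comp_lit_in_comp_set_iff: "comp_lit x \<in> comp_set C \<longleftrightarrow> x \<in> C"
  unfolding comp_set_def by (metis comp_lit_comp_lit image_iff)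

lemma is_clause_insert:
  "is_clause (insert x C) \<longleftrightarrow> is_clause C \<and> comp_lit x \<notin> C"
proof -
  have "x \<noteq> comp_lit x" by (cases x) auto
  then show ?thesis
    unfolding is_clause_def comp_set_def using comp_lit_in_comp_set_iff[unfolded comp_set_def]
    by auto
qed

lemma vars_Un: "vars (F \<union> G) = vars F \<union> vars G"
  unfolding vars_def by auto

lemma vars_insert_image:
  "F \<noteq> {} \<Longrightarrow> vars (insert x ` F) = insert (lit_var x) (vars F)"
  unfolding vars_def by auto

lemma vars_empty_clause [simp]: "vars {{}} = {}"
  by (simp add: vars_def)

lemma finite_vars: "is_clause_set F \<Longrightarrow> finite (vars F)"
  unfolding is_clause_set_def is_clause_def vars_def by auto

lemma MU_falsifying_assignment:
  assumes "F \<in> MU" and "C \<in> F"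
  shows "\<exists>a. (\<forall>x\<in>C. \<not> lit_true a x) \<and> (\<forall>D\<in>F - {C}. \<exists>x\<in>D. lit_true a x)"
proof -
  obtain a where sat: "\<forall>D\<in>F - {C}. \<exists>x\<in>D. lit_true a x"
    using assms unfolding MU_def satisfiable_def by blast
  moreover have "\<forall>x\<in>C. \<not> lit_true a x"
  proof (rule ccontr)
    assume "\<not> (\<forall>x\<in>C. \<not> lit_true a x)"
    with sat have "satisfiable F" unfolding satisfiable_def by blast
    with assms(1) show False unfolding MU_def by blast
  qed
  ultimately show ?thesis by blast
qed

lemma MU_ncls_le_pow_nvars:
  assumes "F \<in> MU"
  shows "ncls F \<le> 2 ^ nvars F"
proof -
  have "\<forall>C\<in>F. \<exists>a. (\<forall>x\<in>C. \<not> lit_true a x) \<and> (\<forall>D\<in>F - {C}. \<exists>x\<in>D. lit_true a x)"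
    using MU_falsifying_assignment[OF assms] by blast
  then obtain asg where asg: "\<forall>C\<in>F. (\<forall>x\<in>C. \<not> lit_true (asg C) x)
      \<and> (\<forall>D\<in>F - {C}. \<exists>x\<in>D. lit_true (asg C) x)"
    by (rule bchoice[THEN exE])
  then have fals: "\<And>C x. C \<in> F \<Longrightarrow> x \<in> C \<Longrightarrow> \<not> lit_true (asg C) x"
    and sat: "\<And>C D. C \<in> F \<Longrightarrow> D \<in> F - {C} \<Longrightarrow> \<exists>x\<in>D. lit_true (asg C) x"
    by blast+
  have fin: "finite (vars F)" using assms finite_vars unfolding MU_def by blast
  define true_vars where "true_vars C = {v \<in> vars F. asg C v}" for C
  have "inj_on true_vars F"
  proof (rule inj_onI, rule ccontr)
    fix C D assume C: "C \<in> F" and D: "D \<in> F" and eq: "true_vars C = true_vars D" and "C \<noteq> D"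
    then obtain x where x: "x \<in> D" "lit_true (asg C) x" using sat by blast
    have "lit_var x \<in> vars F" using x(1) D unfolding vars_def by blast
    with eq have "asg C (lit_var x) = asg D (lit_var x)" unfolding true_vars_def by blast
    with x(2) have "lit_true (asg D) x" using lit_true_cong by metis
    with fals[OF D x(1)] show False by blast
  qed
  then have "card F = card (true_vars ` F)" by (simp add: card_image)
  also have "\<dots> \<le> card (Pow (vars F))"
    using fin unfolding true_vars_def by (intro card_mono) auto
  finally have "card F \<le> card (Pow (vars F))" .
  then show ?thesis unfolding ncls_def nvars_def using fin by (simp add: card_Pow)
qed

text \<open>Removing a clause \<open>C\<close> is repaired by the assignment falsifying \<open>C\<close>: it satisfies every
  other clause through the literal complementary to \<open>C\<close> that the clause must contain.\<close>

lemma UHIT_subset_MU: "UHIT \<subseteq> MU"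
proof
  fix F assume "F \<in> UHIT"
  then have cs: "is_clause_set F" and hit: "hitting F" and "\<not> satisfiable F"
    unfolding UHIT_def by auto
  have "satisfiable (F - {C})" if C: "C \<in> F" for C
  proof -
    define a where "a v \<longleftrightarrow> Neg v \<in> C" for v
    have "C \<inter> comp_set C = {}" using cs C unfolding is_clause_set_def is_clause_def by auto
    then have fals: "\<not> lit_true a x" if "x \<in> C" for x
      using that comp_lit_in_comp_set_iff[of "Pos (lit_var x)" C] unfolding a_def
      by (cases x) auto
    have "\<exists>x\<in>D. lit_true a x" if "D \<in> F - {C}" for D
    proof -
      obtain z where "z \<in> C" "comp_lit z \<in> D"
        using hit \<open>D \<in> F - {C}\<close> C unfolding hitting_def comp_set_def by blast
      then show ?thesis using fals by force
    qed
    then show ?thesis unfolding satisfiable_def by blast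
  qed
  with cs \<open>\<not> satisfiable F\<close> show "F \<in> MU" unfolding MU_def by blast
qed

lemma UHIT_empty_clause: "{{}} \<in> UHIT"
  by (simp add: UHIT_def is_clause_set_def is_clause_def comp_set_def satisfiable_def hitting_def)

definition branch :: "nat \<Rightarrow> lit set set \<Rightarrow> lit set set \<Rightarrow> lit set set" where
  "branch v F G = insert (Pos v) ` F \<union> insert (Neg v) ` G"

lemma vars_branch:
  "F \<noteq> {} \<Longrightarrow> G \<noteq> {} \<Longrightarrow> vars (branch v F G) = insert v (vars F \<union> vars G)"
  unfolding branch_def by (auto simp: vars_Un vars_insert_image)

lemma card_branch:
  assumes "finite F" "finite G" "v \<notin> vars F" "v \<notin> vars G"
  shows "card (branch v F G) = card F + card G"
proof -
  have no_v: "Pos v \<notin> C" "Neg v \<notin> C" if "C \<in> F \<union> G" for C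
    using assms(3,4) that unfolding vars_def by force+
  have "inj_on (insert x) H" if "H \<subseteq> F \<union> G" "x \<in> {Pos v, Neg v}" for x H
    using that no_v by (intro inj_onI) (metis insert_ident subsetD insertE singletonD)
  moreover have "insert (Pos v) ` F \<inter> insert (Neg v) ` G = {}"
    using no_v by auto
  ultimately show ?thesis
    unfolding branch_def using assms(1,2) by (simp add: card_Un_disjoint card_image)
qed

lemma is_clause_set_branch:
  assumes "is_clause_set F" "is_clause_set G" "v \<notin> vars F" "v \<notin> vars G"
  shows "is_clause_set (branch v F G)"
proof -
  have "Pos v \<notin> C" "Neg v \<notin> C" if "C \<in> F \<union> G" for C
    using assms(3,4) that unfolding vars_def by force+
  then show ?thesis
    using assms(1,2) unfolding is_clause_set_def branch_def by (auto simp: is_clause_insert)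
qed

lemma hitting_branch:
  assumes "hitting F" "hitting G"
  shows "hitting (branch v F G)"
  unfolding hitting_def
proof (intro ballI impI)
  fix C D assume C: "C \<in> branch v F G" and D: "D \<in> branch v F G" and "C \<noteq> D"
  show "C \<inter> comp_set D \<noteq> {}"
  proof (cases "Pos v \<in> C \<and> Neg v \<in> D \<or> Neg v \<in> C \<and> Pos v \<in> D")
    case True
    then show ?thesis unfolding comp_set_def by (force intro: rev_image_eqI)
  next
    case False
    with C D assms obtain x C' D' H
      where "C = insert x C'" "D = insert x D'" "C' \<in> H" "D' \<in> H" "hitting H"
      unfolding branch_def by blast
    with \<open>C \<noteq> D\<close> have "C' \<inter> comp_set D' \<noteq> {}" unfolding hitting_def by blast
    with \<open>C = insert x C'\<close> \<open>D = insert x D'\<close> show ?thesis unfolding comp_set_def by blast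
  qed
qed

lemma unsatisfiable_branch:
  assumes "\<not> satisfiable F" "\<not> satisfiable G"
  shows "\<not> satisfiable (branch v F G)"
proof
  assume "satisfiable (branch v F G)"
  then obtain a where a: "\<forall>C\<in>branch v F G. \<exists>x\<in>C. lit_true a x"
    unfolding satisfiable_def by blast
  obtain C where C: "C \<in> F" "\<forall>x\<in>C. \<not> lit_true a x"
    using assms(1) unfolding satisfiable_def by blast
  obtain D where D: "D \<in> G" "\<forall>x\<in>D. \<not> lit_true a x"
    using assms(2) unfolding satisfiable_def by blast
  have "insert (Pos v) C \<in> branch v F G" "insert (Neg v) D \<in> branch v F G"
    using C(1) D(1) unfolding branch_def by blast+
  with a C(2) D(2) show False by (cases "a v") auto
qed

lemma UHIT_branch:
  assumes "F \<in> UHIT" "G \<in> UHIT" "v \<notin> vars F" "v \<notin> vars G"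
  shows "branch v F G \<in> UHIT"
  using assms is_clause_set_branch hitting_branch unsatisfiable_branch unfolding UHIT_def by auto

text \<open>The clauses of a splitting tree over the variables \<open>{..<n}\<close> with \<open>c\<close> leaves; the first
  subtree receives as many leaves as it can hold, leaving at least one for the second.\<close>

fun splitting :: "nat \<Rightarrow> nat \<Rightarrow> lit set set" where
  "splitting 0 c = {{}}"
| "splitting (Suc n) c = (if c \<le> 1 then {{}} else
     branch n (splitting n (min (2 ^ n) (c - 1))) (splitting n (c - min (2 ^ n) (c - 1))))"

lemma splitting_nonempty: "splitting n c \<noteq> {}"
  by (induction n c rule: splitting.induct) (simp_all add: branch_def)

lemma vars_splitting_subset: "vars (splitting n c) \<subseteq> {..<n}"
  by (induction n c rule: splitting.induct)
    (auto simp: vars_branch splitting_nonempty lessThan_Suc intro: subset_insertI2)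

lemma splitting_UHIT: "splitting n c \<in> UHIT"
proof (induction n c rule: splitting.induct)
  case (2 n c)
  have "n \<notin> vars (splitting n d)" for d
    using vars_splitting_subset by blast
  with 2 show ?case by (simp add: UHIT_branch UHIT_empty_clause)
qed (simp add: UHIT_empty_clause)

lemma card_splitting: "1 \<le> c \<Longrightarrow> c \<le> 2 ^ n \<Longrightarrow> card (splitting n c) = c"
proof (induction n arbitrary: c)
  case (Suc n)
  have "finite (splitting n d)" "n \<notin> vars (splitting n d)" for d
    using splitting_UHIT[of n d] vars_splitting_subset[of n d]
    unfolding UHIT_def is_clause_set_def by auto
  with Suc show ?case by (auto simp: card_branch)
qed simp

lemma vars_splitting: "n < c \<Longrightarrow> c \<le> 2 ^ n \<Longrightarrow> vars (splitting n c) = {..<n}"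
proof (induction n arbitrary: c)
  case (Suc n)
  define c1 where "c1 = min (2 ^ n) (c - 1)"
  have "n < c1" "c1 \<le> 2 ^ n" using Suc.prems less_exp[of n] by (auto simp: c1_def)
  then have "vars (splitting n c1) = {..<n}" using Suc.IH by blast
  moreover have "splitting (Suc n) c = branch n (splitting n c1) (splitting n (c - c1))"
    using Suc.prems by (simp add: c1_def)
  ultimately show ?case
    using vars_splitting_subset[of n "c - c1"] by (auto simp: vars_branch splitting_nonempty)
qed simp

lemma pow2_minus_mono: "m \<le> n \<Longrightarrow> (2::int) ^ m - int m \<le> 2 ^ n - int n"
  by (rule lift_Suc_mono_le[of "\<lambda>n. (2::int) ^ n - int n"]) auto

lemma ofun_le_iff: "ofun k \<le> n \<longleftrightarrow> int k \<le> 2 ^ n - int n"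
proof
  have "int k < 2 ^ k"
    using less_exp[of k] by (metis of_nat_less_iff of_nat_numeral of_nat_power)
  then have "int k \<le> 2 ^ Suc k - int (Suc k)" by simp
  then have "int k \<le> 2 ^ ofun k - int (ofun k)"
    unfolding ofun_def by (rule LeastI)
  then show "ofun k \<le> n \<Longrightarrow> int k \<le> 2 ^ n - int n"
    using pow2_minus_mono order_trans by blast
qed (simp add: ofun_def Least_le)

lemma MU_deficiency_bound:
  assumes "F \<in> with_deficiency MU (int k)"
  shows "ncls F = nvars F + k" "ofun k \<le> nvars F"
proof -
  have "F \<in> MU" and d: "int (ncls F) - int (nvars F) = int k"
    using assms unfolding with_deficiency_def deficiency_def by auto
  then have "int (ncls F) \<le> 2 ^ nvars F"
    using MU_ncls_le_pow_nvars by (metis of_nat_le_iff of_nat_numeral of_nat_power)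
  with d show "ncls F = nvars F + k" "ofun k \<le> nvars F"
    unfolding ofun_le_iff by linarith+
qed

lemma UHIT_with_deficiency_exists:
  assumes "1 \<le> k" "ofun k \<le> n"
  shows "\<exists>F\<in>with_deficiency UHIT (int k). nvars F = n \<and> ncls F = n + k"
proof -
  have "n + k \<le> 2 ^ n"
    using assms(2) unfolding ofun_le_iff by (metis add.commute le_diff_eq of_nat_add
        of_nat_le_iff of_nat_numeral of_nat_power)
  then have "nvars (splitting n (n + k)) = n" "ncls (splitting n (n + k)) = n + k"
    using assms(1) vars_splitting card_splitting unfolding nvars_def ncls_def by simp_all
  then show ?thesis
    using splitting_UHIT unfolding with_deficiency_def deficiency_def by force
qed

lemma image_eq_if_between:
  "A \<subseteq> B \<Longrightarrow> f ` B \<subseteq> X \<Longrightarrow> X \<subseteq> f ` A \<Longrightarrow> f ` A = f ` B \<and> f ` B = X"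
  by blast

theorem theorem6p13:
  fixes k :: nat
  assumes "k \<ge> 1"
  shows "nvars ` with_deficiency UHIT (int k) = nvars ` with_deficiency MU (int k)
       \<and> nvars ` with_deficiency MU (int k) = {n. n \<ge> ofun k}
       \<and> ncls ` with_deficiency UHIT (int k) = ncls ` with_deficiency MU (int k)
       \<and> ncls ` with_deficiency MU (int k) = {m. m \<ge> 1 \<and> m \<ge> ofun k + k}"
proof -
  let ?U = "with_deficiency UHIT (int k)" and ?M = "with_deficiency MU (int k)"
  have UM: "?U \<subseteq> ?M" using UHIT_subset_MU unfolding with_deficiency_def by blast
  have "nvars ` ?U = nvars ` ?M \<and> nvars ` ?M = {n. n \<ge> ofun k}"
  proof (rule image_eq_if_between[OF UM])
    show "nvars ` ?M \<subseteq> {n. n \<ge> ofun k}" using MU_deficiency_bound by blast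
    show "{n. n \<ge> ofun k} \<subseteq> nvars ` ?U" using UHIT_with_deficiency_exists[OF assms] by blast
  qed
  moreover have "ncls ` ?U = ncls ` ?M \<and> ncls ` ?M = {m. m \<ge> 1 \<and> m \<ge> ofun k + k}"
  proof (rule image_eq_if_between[OF UM])
    show "ncls ` ?M \<subseteq> {m. m \<ge> 1 \<and> m \<ge> ofun k + k}"
      using MU_deficiency_bound assms by fastforce
    show "{m. m \<ge> 1 \<and> m \<ge> ofun k + k} \<subseteq> ncls ` ?U"
    proof
      fix m assume "m \<in> {m. m \<ge> 1 \<and> m \<ge> ofun k + k}"
      then have "ofun k \<le> m - k" "m = m - k + k" by auto
      then obtain F where "F \<in> ?U" "ncls F = m"
        using UHIT_with_deficiency_exists[OF assms] by metis
      then show "m \<in> ncls ` ?U" by blast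
    qed
  qed
  ultimately show ?thesis by (simp only: conj_assoc)
qed

end
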